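(* Let $\mathcal{R}$ be the involutive system $u_{ij}=f_{ij}(x^1,x^2,x^3,u,u_i,u_j)$, $1\le i<j\le 3$, with infinite prolongation $\mathcal{R}^\infty$, characteristic vector fields $X_i=D_i$, rescaled contact form $\Theta=\mu\theta$, and characteristic coframe forms $\xi_j^k=X_j^k(\Theta)$. Then for every $k\ge 1$ and every $i\neq j$ in $\{1,2,3\}$, the form $X_i(\xi_j^k)$, restricted to $\mathcal{R}^\infty$, has adapted order less than or equal to $k$.
   Context: Setting: $U\subset\mathbb{R}^3$ open connected, $E=U\times(a,b)\to U$ trivial bundle with coordinates $(x^1,x^2,x^3,u)$, $J^\infty(E)$ its infinite jet bundle with coordinates $x^i,u,u_I$ and contact forms $\theta_I=du_I-\sum_{j}u_{Ij}dx^j$ (write $\theta=\theta_\emptyset=du-\sum_i u_i dx^i$). $\mathcal{R}$ is the system $F_{ij}:=u_{ij}-f_{ij}(x^1,x^2,x^3,u,u_i,u_j)=0$, $1\le i<j\le 3$, with $f_{ij}$ smooth and satisfying the integrability conditions $D_kf_{ij}=D_if_{kj}$ for distinct $i,j,k$ (so the system is involutive). $\mathcal{R}^\infty\subset J^\infty(E)$ is its infinite prolongation (locus where all $F_{ij}$ and all their total derivatives vanish), with coordinates $(x^i,u,u_i,u_{ii},\dots,u_{i^k},\dots)$. $D_i$ denotes the total derivative restricted to $\mathcal{R}^\infty$; these commute, and $X_i:=D_i$, $\sigma_i:=dx^i$. Forms on $\mathcal{R}^\infty$ are bigraded, $\Omega^{r,s}$ = forms of horizontal degree $r$ (in $dx^i$)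 and contact degree $s$; $d=d_H+d_V$. For a total vector field $X$ and $\omega\in\Omega^{r,s}$, $X(\omega)$ denotes the projected Lie derivative $\pi^{r,s}(\mathcal{L}_X\omega)$; one has $X_j(\theta_I)=\theta_{Ij}$ and $d_H\omega=\sum_i\sigma_i\wedge X_i(\omega)$. Applying $d_V$ to $F_{ij}=0$ gives on $\mathcal{R}^\infty$: $X_iX_j(\theta)+a^i_{ij}X_i(\theta)+a^j_{ij}X_j(\theta)+c_{ij}\theta=0$ with $a^i_{ij}=\partial F_{ij}/\partial u_i$, $a^j_{ij}=\partial F_{ij}/\partial u_j$, $c_{ij}=\partial F_{ij}/\partial u$. For a nonvanishing function $\mu$ on $\mathcal{R}^\infty$ set $\Theta=\mu\theta$. Define $\xi_i^k=X_i^k(\Theta)$ for $i=1,2,3$, $k\ge1$. A form on $\mathcal{R}^\infty$ has adapted order $\le k$ if it lies in the exterior algebra generated over $C^\infty(\mathcal{R}^\infty)$ by $\{\sigma_1,\sigma_2,\sigma_3,\Theta,\xi_1^1,\xi_2^1,\xi_3^1,\dots,\xi_1^k,\xi_2^k,\xi_3^k\}$; its adapted order is the minimal such $k$. *)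

theory Defs
  imports "HOL-Analysis.Analysis"
begin

text \<open>Jet coordinates on the infinite prolongation R^infinity of the system
  u_ij = f_ij(x,u,u_i,u_j), 1 <= i < j <= 3 (directions indexed by the type 3).
  Vertical (fibre) coordinates: Uc is u, Dc i m is the pure derivative u_{i^(m+1)}.\<close>

datatype vc = Uc | Dc "3" nat
datatype jc = Xc "3" | Vc vc

type_synonym pt = "jc \<Rightarrow> real"

definition jdom :: "(real^3) set \<Rightarrow> real \<Rightarrow> real \<Rightarrow> pt set" where
  "jdom U a b = {p. (\<chi> l. p (Xc l)) \<in> U \<and> a < p (Vc Uc) \<and> p (Vc Uc) < b}"

definition partial :: "jc \<Rightarrow> (pt \<Rightarrow> real) \<Rightarrow> pt \<Rightarrow> real" where
  "partial c G p = deriv (\<lambda>t. G (p(c := t))) (p c)"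

definition dep :: "pt set \<Rightarrow> (pt \<Rightarrow> real) \<Rightarrow> jc set" where
  "dep Dom G = {c. \<exists>p t. p \<in> Dom \<and> p(c := t) \<in> Dom \<and> G (p(c := t)) \<noteq> G p}"

fun pd :: "jc list \<Rightarrow> (pt \<Rightarrow> real) \<Rightarrow> pt \<Rightarrow> real" where
  "pd [] G = G"
| "pd (c # cs) G = partial c (pd cs G)"

definition smooth_jet :: "pt set \<Rightarrow> (pt \<Rightarrow> real) \<Rightarrow> bool" where
  "smooth_jet Dom G \<longleftrightarrow> finite (dep Dom G) \<and>
     (\<forall>cs. continuous_on Dom (pd cs G) \<and>
        (\<forall>c. \<forall>p\<in>Dom. (\<lambda>t. pd cs G (p(c := t))) differentiable (at (p c))))"

text \<open>The right-hand side f_ij of the system as a function on R^infinity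
  (symmetric in i j; only f i j with i < j is used).\<close>
definition Fsys :: "(3 \<Rightarrow> 3 \<Rightarrow> real^3 \<Rightarrow> real \<Rightarrow> real \<Rightarrow> real \<Rightarrow> real) \<Rightarrow> 3 \<Rightarrow> 3 \<Rightarrow> pt \<Rightarrow> real" where
  "Fsys f i j p = (if i < j
      then f i j (\<chi> l. p (Xc l)) (p (Vc Uc)) (p (Vc (Dc i 0))) (p (Vc (Dc j 0)))
      else f j i (\<chi> l. p (Xc l)) (p (Vc Uc)) (p (Vc (Dc j 0))) (p (Vc (Dc i 0))))"

definition Dvec :: "pt set \<Rightarrow> (jc \<Rightarrow> pt \<Rightarrow> real) \<Rightarrow> (pt \<Rightarrow> real) \<Rightarrow> pt \<Rightarrow> real" where
  "Dvec Dom V G p = (\<Sum>c\<in>dep Dom G. partial c G p * V c p)"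

text \<open>Components of D_j on the coordinates x, u, u_{j^n}, u_l (l ~= j); enough to
  compute D_j^m f_ij.\<close>
definition Wpure :: "(3 \<Rightarrow> 3 \<Rightarrow> real^3 \<Rightarrow> real \<Rightarrow> real \<Rightarrow> real \<Rightarrow> real) \<Rightarrow> 3 \<Rightarrow> jc \<Rightarrow> pt \<Rightarrow> real" where
  "Wpure f j c p = (case c of
      Xc l \<Rightarrow> (if l = j then 1 else 0)
    | Vc Uc \<Rightarrow> p (Vc (Dc j 0))
    | Vc (Dc l n) \<Rightarrow> (if l = j then p (Vc (Dc j (Suc n)))
                     else if n = 0 then Fsys f j l p else 0))"

text \<open>comp f Dom i v = D_i applied to the coordinate v, restricted to R^infinity:
  D_i u = u_i, D_i u_{i^(m+1)} = u_{i^(m+2)}, and for j ~= i,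
  D_i u_{j^(m+1)} = u_{i j^(m+1)} = D_j^m f_ij.\<close>
definition comp :: "(3 \<Rightarrow> 3 \<Rightarrow> real^3 \<Rightarrow> real \<Rightarrow> real \<Rightarrow> real \<Rightarrow> real) \<Rightarrow> pt set \<Rightarrow> 3 \<Rightarrow> vc \<Rightarrow> pt \<Rightarrow> real" where
  "comp f Dom i v = (case v of
      Uc \<Rightarrow> (\<lambda>p. p (Vc (Dc i 0)))
    | Dc j m \<Rightarrow> (if j = i then (\<lambda>p. p (Vc (Dc i (Suc m))))
                 else (Dvec Dom (Wpure f j) ^^ m) (Fsys f i j)))"

definition Vfull :: "(3 \<Rightarrow> 3 \<Rightarrow> real^3 \<Rightarrow> real \<Rightarrow> real \<Rightarrow> real \<Rightarrow> real) \<Rightarrow> pt set \<Rightarrow> 3 \<Rightarrow> jc \<Rightarrow> pt \<Rightarrow> real" where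
  "Vfull f Dom i c p = (case c of Xc l \<Rightarrow> (if l = i then 1 else 0) | Vc v \<Rightarrow> comp f Dom i v p)"

definition Dtot :: "(3 \<Rightarrow> 3 \<Rightarrow> real^3 \<Rightarrow> real \<Rightarrow> real \<Rightarrow> real \<Rightarrow> real) \<Rightarrow> pt set \<Rightarrow> 3 \<Rightarrow> (pt \<Rightarrow> real) \<Rightarrow> pt \<Rightarrow> real" where
  "Dtot f Dom i = Dvec Dom (Vfull f Dom i)"

text \<open>One-forms on R^infinity in the coframe dx^l (component Xc l) and
  theta_v (component Vc v): omega p c is the coefficient of the coframe element c at p.\<close>
type_synonym form1 = "pt \<Rightarrow> jc \<Rightarrow> real"

definition dV :: "(pt \<Rightarrow> real) \<Rightarrow> form1" where
  "dV G = (\<lambda>p c. case c of Xc l \<Rightarrow> 0 | Vc v \<Rightarrow> partial (Vc v) G p)"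

definition fsupp :: "pt set \<Rightarrow> form1 \<Rightarrow> jc set" where
  "fsupp Dom \<omega> = {c. \<exists>p\<in>Dom. \<omega> p c \<noteq> 0}"

text \<open>Projected Lie derivative X_i(omega) along X_i = D_i of a one-form:
  X_i(g dx^l) = D_i(g) dx^l,  X_i(g theta_v) = D_i(g) theta_v + g d_V(D_i v).\<close>
definition Xop :: "(3 \<Rightarrow> 3 \<Rightarrow> real^3 \<Rightarrow> real \<Rightarrow> real \<Rightarrow> real \<Rightarrow> real) \<Rightarrow> pt set \<Rightarrow> 3 \<Rightarrow> form1 \<Rightarrow> form1" where
  "Xop f Dom i \<omega> = (\<lambda>p c. Dtot f Dom i (\<lambda>q. \<omega> q c) p
      + (\<Sum>v\<in>{v. Vc v \<in> fsupp Dom \<omega>}. \<omega> p (Vc v) * dV (comp f Dom i v) p c))"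

definition sigma :: "3 \<Rightarrow> form1" where
  "sigma l = (\<lambda>p c. if c = Xc l then 1 else 0)"

definition Theta :: "(pt \<Rightarrow> real) \<Rightarrow> form1" where
  "Theta \<mu> = (\<lambda>p c. if c = Vc Uc then \<mu> p else 0)"

definition xi :: "(3 \<Rightarrow> 3 \<Rightarrow> real^3 \<Rightarrow> real \<Rightarrow> real \<Rightarrow> real \<Rightarrow> real) \<Rightarrow> pt set \<Rightarrow> (pt \<Rightarrow> real) \<Rightarrow> 3 \<Rightarrow> nat \<Rightarrow> form1" where
  "xi f Dom \<mu> j k = (Xop f Dom j ^^ k) (Theta \<mu>)"

text \<open>Adapted order <= k for a one-form: it lies in the degree-one part of the exterior
  algebra over smooth functions generated by sigma_l, Theta, xi_l^m (m <= k), i.e. it is a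
  smooth-coefficient combination of these generators.\<close>
definition adapted_order_le1 :: "(3 \<Rightarrow> 3 \<Rightarrow> real^3 \<Rightarrow> real \<Rightarrow> real \<Rightarrow> real \<Rightarrow> real) \<Rightarrow> pt set \<Rightarrow> (pt \<Rightarrow> real) \<Rightarrow> nat \<Rightarrow> form1 \<Rightarrow> bool" where
  "adapted_order_le1 f Dom \<mu> k \<omega> \<longleftrightarrow>
     (\<exists>s a b. (\<forall>l. smooth_jet Dom (s l)) \<and> smooth_jet Dom a \<and> (\<forall>l m. smooth_jet Dom (b l m)) \<and>
       (\<forall>p\<in>Dom. \<forall>c. \<omega> p c = (\<Sum>l\<in>UNIV. s l p * sigma l p c) + a p * Theta \<mu> p c
            + (\<Sum>l\<in>UNIV. \<Sum>m\<in>{1..k}. b l m p * xi f Dom \<mu> l m p c)))"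

end

(*
  On the infinite prolongation the total derivative of a vertical coordinate is again a function
  of finitely many jet coordinates. In its own direction, D_j simply shifts u_{j^n} to u_{j^(n+1)};
  for i ~= j, D_i u_{j^(n+1)} = D_j^n f_ij involves only x, u, u_i and u_j, ..., u_{j^(n+1)}.
  Hence xi_j^k = sum_{n<=k} g_n theta_{j^n} with leading coefficient g_k = mu, and X_i(xi_j^k)
  is a smooth combination of theta_i and theta_{j^n}, n <= k. Because mu does not vanish, the
  triangular relations xi_l^n = mu theta_{l^n} + (lower terms) express every theta_{l^n}, n <= k,
  through Theta, xi_l^1, ..., xi_l^n, and so X_i(xi_j^k) has adapted order at most k.
*)

theory Submission
  imports Defs
begin

section \<open>Smooth functions of finitely many jet coordinates\<close>

definition line_open :: "pt set \<Rightarrow> bool" where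
  "line_open D \<longleftrightarrow> (\<forall>p\<in>D. \<forall>c. \<exists>e>0. \<forall>t. \<bar>t - p c\<bar> < e \<longrightarrow> p(c := t) \<in> D)"

lemma line_open_jdom:
  assumes "open U"
  shows "line_open (jdom U a b)"
  unfolding line_open_def
proof (intro ballI allI)
  fix p c assume p: "p \<in> jdom U a b"
  show "\<exists>e>0. \<forall>t. \<bar>t - p c\<bar> < e \<longrightarrow> p(c := t) \<in> jdom U a b"
  proof (cases c)
    case (Xc l)
    define x where "x = (\<chi> l. p (Xc l))"
    have "x \<in> U" using p by (simp add: jdom_def x_def)
    then obtain e where e: "e > 0" "ball x e \<subseteq> U"
      using assms open_contains_ball by blast
    show ?thesis
    proof (intro exI[of _ e] conjI allI impI)
      fix t assume t: "\<bar>t - p c\<bar> < e"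
      define y where "y = (\<chi> l'. (p(c := t)) (Xc l'))"
      have "dist y x \<le> (\<Sum>i\<in>UNIV. \<bar>(y - x) $ i\<bar>)"
        unfolding dist_norm by (rule norm_le_l1_cart)
      also have "\<dots> = (\<Sum>i\<in>UNIV. if i = l then \<bar>t - p c\<bar> else 0)"
        by (intro sum.cong refl) (auto simp: y_def x_def Xc)
      also have "\<dots> = \<bar>t - p c\<bar>" by simp
      finally have "y \<in> U" using t e by (auto simp: dist_commute)
      then show "p(c := t) \<in> jdom U a b" using p by (simp add: jdom_def y_def Xc)
    qed (use e in auto)
  next
    case (Vc v)
    show ?thesis
    proof (cases "v = Uc")
      case True
      then show ?thesis using p
        by (intro exI[of _ "min (p (Vc Uc) - a) (b - p (Vc Uc))"]) (auto simp: jdom_def Vc)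
    next
      case False
      then show ?thesis using p by (intro exI[of _ 1]) (auto simp: jdom_def Vc)
    qed
  qed
qed

definition line_differentiable :: "pt set \<Rightarrow> (pt \<Rightarrow> real) \<Rightarrow> bool" where
  "line_differentiable D F \<longleftrightarrow> (\<forall>c. \<forall>p\<in>D. (\<lambda>t. F (p(c := t))) differentiable at (p c))"

definition smooth_upto :: "pt set \<Rightarrow> nat \<Rightarrow> (pt \<Rightarrow> real) \<Rightarrow> bool" where
  "smooth_upto D n F \<longleftrightarrow>
     (\<forall>cs. length cs \<le> n \<longrightarrow> continuous_on D (pd cs F) \<and> line_differentiable D (pd cs F))"

definition smooth_partials :: "pt set \<Rightarrow> (pt \<Rightarrow> real) \<Rightarrow> bool" where
  "smooth_partials D F \<longleftrightarrow> (\<forall>n. smooth_upto D n F)"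

lemma smooth_jet_iff: "smooth_jet D F \<longleftrightarrow> finite (dep D F) \<and> smooth_partials D F"
  unfolding smooth_jet_def smooth_partials_def smooth_upto_def line_differentiable_def by blast

lemma pd_append: "pd (cs @ [c]) F = pd cs (partial c F)"
  by (induction cs) auto

lemma smooth_upto_mono: "m \<le> n \<Longrightarrow> smooth_upto D n F \<Longrightarrow> smooth_upto D m F"
  by (simp add: smooth_upto_def)

lemma smooth_upto_0: "smooth_upto D 0 F \<longleftrightarrow> continuous_on D F \<and> line_differentiable D F"
  by (simp add: smooth_upto_def)

lemma smooth_upto_Suc:
  "smooth_upto D (Suc n) F \<longleftrightarrow> smooth_upto D 0 F \<and> (\<forall>c. smooth_upto D n (partial c F))"
proof
  assume F: "smooth_upto D (Suc n) F"
  have "smooth_upto D n (partial c F)" for c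
    unfolding smooth_upto_def pd_append[symmetric]
    using F by (simp add: smooth_upto_def)
  moreover have "smooth_upto D 0 F"
    using F smooth_upto_mono by blast
  ultimately show "smooth_upto D 0 F \<and> (\<forall>c. smooth_upto D n (partial c F))"
    by blast
next
  assume F: "smooth_upto D 0 F \<and> (\<forall>c. smooth_upto D n (partial c F))"
  show "smooth_upto D (Suc n) F"
    unfolding smooth_upto_def
  proof (intro allI impI)
    fix cs :: "jc list" assume "length cs \<le> Suc n"
    then show "continuous_on D (pd cs F) \<and> line_differentiable D (pd cs F)"
      using F by (cases cs rule: rev_exhaust) (auto simp: smooth_upto_def pd_append)
  qed
qed

lemma smooth_partials_partial: "smooth_partials D F \<Longrightarrow> smooth_partials D (partial c F)"
  by (simp add: smooth_partials_def) (meson smooth_upto_Suc)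

lemma partial_add:
  fixes F G :: "pt \<Rightarrow> real"
  assumes "(\<lambda>t. F (p(c := t))) differentiable at (p c)" "(\<lambda>t. G (p(c := t))) differentiable at (p c)"
  shows "partial c (\<lambda>q. F q + G q) p = partial c F p + partial c G p"
  using assms unfolding partial_def by (simp add: real_differentiable_def field_differentiable_def)

lemma partial_mult:
  fixes F G :: "pt \<Rightarrow> real"
  assumes "(\<lambda>t. F (p(c := t))) differentiable at (p c)" "(\<lambda>t. G (p(c := t))) differentiable at (p c)"
  shows "partial c (\<lambda>q. F q * G q) p = F p * partial c G p + partial c F p * G p"
  using assms unfolding partial_def by (simp add: real_differentiable_def field_differentiable_def)

lemma partial_divide:
  fixes F G :: "pt \<Rightarrow> real"
  assumes "(\<lambda>t. F (p(c := t))) differentiable at (p c)" "(\<lambda>t. G (p(c := t))) differentiable at (p c)"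
    and "G p \<noteq> 0"
  shows "partial c (\<lambda>q. F q / G q) p = (partial c F p * G p - F p * partial c G p) / (G p * G p)"
  using assms unfolding partial_def
  by (simp add: real_differentiable_def field_differentiable_def power2_eq_square)

lemma partial_const [simp]: "partial c (\<lambda>q. k) = (\<lambda>q. 0)"
  by (simp add: partial_def fun_eq_iff)

lemma partial_coord: "partial c (\<lambda>q. q c') = (\<lambda>q. if c = c' then 1 else 0)"
  by (simp add: partial_def fun_eq_iff)

lemma line_differentiable_const: "line_differentiable D (\<lambda>q. k)"
  by (simp add: line_differentiable_def)

lemma line_differentiable_coord: "line_differentiable D (\<lambda>q. q c')"
  unfolding line_differentiable_def
proof (intro allI ballI)
  fix c and p :: pt
  show "(\<lambda>t. (p(c := t)) c') differentiable at (p c)"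
    by (cases "c' = c") auto
qed

lemma smooth_upto_const: "smooth_upto D n (\<lambda>q. k)"
proof -
  have "pd cs (\<lambda>q. k) = (\<lambda>q. if cs = [] then k else 0)" for cs
    by (induction cs) auto
  then show ?thesis
    by (simp add: smooth_upto_def line_differentiable_const)
qed

lemma smooth_upto_coord: "smooth_upto D n (\<lambda>q. q c')"
proof (cases n)
  case 0
  have "continuous_on D (\<lambda>q::pt. q c')"
    by (rule continuous_on_subset[OF continuous_on_product_coordinates subset_UNIV])
  with 0 show ?thesis by (simp add: smooth_upto_0 line_differentiable_coord)
next
  case (Suc m)
  have "continuous_on D (\<lambda>q::pt. q c')"
    by (rule continuous_on_subset[OF continuous_on_product_coordinates subset_UNIV])
  with Suc show ?thesis
    by (simp add: smooth_upto_Suc smooth_upto_0 line_differentiable_coord partial_coord smooth_upto_const)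
qed

lemma dep_const [simp]: "dep D (\<lambda>q. k) = {}"
  by (simp add: dep_def)

lemma dep_coord: "dep D (\<lambda>q. q c') \<subseteq> {c'}"
  by (auto simp: dep_def)

lemma dep_binop: "dep D (\<lambda>q. h (F q) (G q)) \<subseteq> dep D F \<union> dep D G"
  unfolding dep_def by force

lemma dep_sum: "dep D (\<lambda>q. \<Sum>x\<in>S. F x q) \<subseteq> (\<Union>x\<in>S. dep D (F x))"
proof
  fix c assume "c \<in> dep D (\<lambda>q. \<Sum>x\<in>S. F x q)"
  then obtain p t where pt: "p \<in> D" "p(c := t) \<in> D" "(\<Sum>x\<in>S. F x (p(c := t))) \<noteq> (\<Sum>x\<in>S. F x p)"
    unfolding dep_def by auto
  then obtain x where "x \<in> S" "F x (p(c := t)) \<noteq> F x p"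
    by (meson sum.cong)
  with pt show "c \<in> (\<Union>x\<in>S. dep D (F x))" unfolding dep_def by auto
qed

lemma dep_cong: "\<forall>q\<in>D. F q = G q \<Longrightarrow> dep D F = dep D G"
  unfolding dep_def by (rule Collect_cong) metis

lemma dep_eq_empty: "\<forall>q\<in>D. F q = 0 \<Longrightarrow> dep D F = {}"
  using dep_cong[of D F "\<lambda>q. 0"] by simp

lemma smooth_jet_const: "smooth_jet D (\<lambda>q. k)"
  by (simp add: smooth_jet_iff smooth_partials_def smooth_upto_const)

lemma smooth_jet_coord: "smooth_jet D (\<lambda>q. q c')"
  unfolding smooth_jet_iff smooth_partials_def
  using smooth_upto_coord dep_coord by (metis finite.emptyI finite_insert finite_subset)

locale jet_domain =
  fixes D :: "pt set"
  assumes line_open: "line_open D"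
begin

lemma eventually_in_domain:
  assumes "p \<in> D"
  shows "eventually (\<lambda>t. p(c := t) \<in> D) (nhds (p c))"
proof -
  obtain e where "e > 0" "\<And>t. \<bar>t - p c\<bar> < e \<Longrightarrow> p(c := t) \<in> D"
    using line_open assms unfolding line_open_def by blast
  then show ?thesis unfolding eventually_nhds_metric
    by (intro exI[of _ e]) (auto simp: dist_real_def)
qed

lemma eventually_eq_on_line:
  assumes "p \<in> D" "\<forall>q\<in>D. F q = G q"
  shows "eventually (\<lambda>t. F (p(c := t)) = G (p(c := t))) (nhds (p c))"
  using eventually_in_domain[OF assms(1)] by eventually_elim (use assms(2) in auto)

lemma partial_cong:
  assumes "p \<in> D" "\<forall>q\<in>D. F q = G q"
  shows "partial c F p = partial c G p"
  unfolding partial_def by (rule deriv_cong_ev[OF eventually_eq_on_line[OF assms] refl])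

lemma line_differentiable_cong:
  assumes "\<forall>q\<in>D. F q = G q" "line_differentiable D F"
  shows "line_differentiable D G"
  unfolding line_differentiable_def
proof (intro allI ballI)
  fix c p assume p: "p \<in> D"
  obtain d where "((\<lambda>t. F (p(c := t))) has_real_derivative d) (at (p c))"
    using assms(2) p by (auto simp: line_differentiable_def real_differentiable_def)
  then have "((\<lambda>t. G (p(c := t))) has_real_derivative d) (at (p c))"
    using DERIV_cong_ev[OF refl eventually_eq_on_line[OF p assms(1)] refl] by blast
  then show "(\<lambda>t. G (p(c := t))) differentiable at (p c)"
    by (auto simp: real_differentiable_def)
qed

lemma smooth_upto_cong:
  assumes "\<forall>q\<in>D. F q = G q" "smooth_upto D n F"
  shows "smooth_upto D n G"
proof -
  have eq: "\<forall>q\<in>D. pd cs F q = pd cs G q" for cs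
    by (induction cs) (use assms(1) partial_cong in auto)
  have "continuous_on D (pd cs G) \<and> line_differentiable D (pd cs G)"
    if "continuous_on D (pd cs F) \<and> line_differentiable D (pd cs F)" for cs
    using that eq[of cs] continuous_on_cong[OF refl, of D "pd cs F" "pd cs G"]
      line_differentiable_cong by auto
  with assms(2) show ?thesis unfolding smooth_upto_def by blast
qed

lemma smooth_upto_add:
  assumes "smooth_upto D n F" "smooth_upto D n G"
  shows "smooth_upto D n (\<lambda>q. F q + G q)"
  using assms
proof (induction n arbitrary: F G)
  case 0
  then show ?case
    by (auto simp: smooth_upto_0 line_differentiable_def intro!: continuous_intros)
next
  case (Suc n)
  have diff: "line_differentiable D F" "line_differentiable D G"
    using Suc.prems by (simp_all add: smooth_upto_Suc smooth_upto_0)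
  have "smooth_upto D n (partial c (\<lambda>q. F q + G q))" for c
  proof (rule smooth_upto_cong)
    show "\<forall>q\<in>D. partial c F q + partial c G q = partial c (\<lambda>q. F q + G q) q"
      using diff by (auto simp: line_differentiable_def partial_add)
    show "smooth_upto D n (\<lambda>q. partial c F q + partial c G q)"
      using Suc by (simp add: smooth_upto_Suc)
  qed
  moreover have "smooth_upto D 0 (\<lambda>q. F q + G q)"
    using Suc.prems
    by (auto simp: smooth_upto_Suc smooth_upto_0 line_differentiable_def intro!: continuous_intros)
  ultimately show ?case by (simp add: smooth_upto_Suc)
qed

lemma smooth_partials_base:
  "smooth_partials D F \<Longrightarrow> continuous_on D F \<and> line_differentiable D F"
  by (simp add: smooth_partials_def flip: smooth_upto_0)

lemma smooth_partials_add:
  "smooth_partials D F \<Longrightarrow> smooth_partials D G \<Longrightarrow> smooth_partials D (\<lambda>q. F q + G q)"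
  by (simp add: smooth_partials_def smooth_upto_add)

lemma smooth_upto_mult:
  assumes "smooth_partials D F" "smooth_partials D G"
  shows "smooth_upto D n (\<lambda>q. F q * G q)"
  using assms
proof (induction n arbitrary: F G)
  case 0
  then show ?case using smooth_partials_base[of F] smooth_partials_base[of G]
    by (auto simp: smooth_upto_0 line_differentiable_def intro!: continuous_intros)
next
  case (Suc n)
  have diff: "line_differentiable D F" "line_differentiable D G"
    using Suc.prems smooth_partials_base by blast+
  have "smooth_upto D n (partial c (\<lambda>q. F q * G q))" for c
  proof (rule smooth_upto_cong)
    show "\<forall>q\<in>D. F q * partial c G q + partial c F q * G q = partial c (\<lambda>q. F q * G q) q"
      using diff by (auto simp: line_differentiable_def partial_mult)
    show "smooth_upto D n (\<lambda>q. F q * partial c G q + partial c F q * G q)"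
      using Suc smooth_partials_partial by (intro smooth_upto_add) auto
  qed
  with Suc.IH[of F G] Suc.prems show ?case
    by (simp add: smooth_upto_Suc smooth_upto_mono[of 0 n])
qed

lemma smooth_partials_mult:
  "smooth_partials D F \<Longrightarrow> smooth_partials D G \<Longrightarrow> smooth_partials D (\<lambda>q. F q * G q)"
  by (simp add: smooth_partials_def smooth_upto_mult)

lemma smooth_partials_diff:
  assumes "smooth_partials D F" "smooth_partials D G"
  shows "smooth_partials D (\<lambda>q. F q - G q)"
proof -
  have "smooth_partials D (\<lambda>q. F q + (\<lambda>q. -1) q * G q)"
    using assms smooth_upto_const
    by (intro smooth_partials_add smooth_partials_mult) (auto simp: smooth_partials_def)
  then show ?thesis by simp
qed

lemma smooth_upto_divide:
  assumes "smooth_partials D F" "smooth_partials D G" "\<forall>q\<in>D. G q \<noteq> 0"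
  shows "smooth_upto D n (\<lambda>q. F q / G q)"
  using assms
proof (induction n arbitrary: F G)
  case 0
  then show ?case using smooth_partials_base[of F] smooth_partials_base[of G]
    by (auto simp: smooth_upto_0 line_differentiable_def intro!: continuous_intros)
next
  case (Suc n)
  have diff: "line_differentiable D F" "line_differentiable D G"
    using Suc.prems smooth_partials_base by blast+
  have "smooth_upto D n (partial c (\<lambda>q. F q / G q))" for c
  proof (rule smooth_upto_cong)
    show "\<forall>q\<in>D. (partial c F q * G q - F q * partial c G q) / (G q * G q)
        = partial c (\<lambda>q. F q / G q) q"
      using diff Suc.prems(3) by (auto simp: line_differentiable_def partial_divide)
    show "smooth_upto D n (\<lambda>q. (partial c F q * G q - F q * partial c G q) / (G q * G q))"
      using Suc.prems smooth_partials_partial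
      by (intro Suc.IH smooth_partials_diff smooth_partials_mult) auto
  qed
  with Suc.IH[of F G] Suc.prems show ?case
    by (simp add: smooth_upto_Suc smooth_upto_mono[of 0 n])
qed

lemma smooth_partials_divide:
  "smooth_partials D F \<Longrightarrow> smooth_partials D G \<Longrightarrow> \<forall>q\<in>D. G q \<noteq> 0 \<Longrightarrow>
    smooth_partials D (\<lambda>q. F q / G q)"
  by (simp add: smooth_partials_def smooth_upto_divide)

lemma partial_eq_0_if_notin_dep:
  assumes "p \<in> D" "c \<notin> dep D F"
  shows "partial c F p = 0"
proof -
  have "eventually (\<lambda>t. F (p(c := t)) = F p) (nhds (p c))"
    using eventually_in_domain[OF assms(1)]
    by eventually_elim (use assms in \<open>auto simp: dep_def\<close>)
  then have "deriv (\<lambda>t. F (p(c := t))) (p c) = deriv (\<lambda>t. F p) (p c)"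
    by (rule deriv_cong_ev) simp
  then show ?thesis by (simp add: partial_def)
qed

lemma dep_partial: "dep D (partial c F) \<subseteq> dep D F"
proof
  fix d assume d: "d \<in> dep D (partial c F)"
  show "d \<in> dep D F"
  proof (rule ccontr)
    assume nd: "d \<notin> dep D F"
    from d obtain p t where pt: "p \<in> D" "p(d := t) \<in> D" "partial c F (p(d := t)) \<noteq> partial c F p"
      by (auto simp: dep_def)
    show False
    proof (cases "d = c")
      case True
      then show False using pt partial_eq_0_if_notin_dep[OF _ nd] by auto
    next
      case False
      \<comment> \<open>moving along the d-line does not change F near the c-line, hence not its c-derivative\<close>
      have "eventually (\<lambda>s. (p(d := t))(c := s) \<in> D) (nhds (p c))"
        using eventually_in_domain[OF pt(2), of c] False by simp
      then have "eventually (\<lambda>s. F ((p(d := t))(c := s)) = F (p(c := s))) (nhds (p c))"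
        using eventually_in_domain[OF pt(1), of c]
      proof eventually_elim
        case (elim s)
        have "(p(d := t))(c := s) = (p(c := s))(d := t)" using False by (auto simp: fun_upd_twist)
        with elim False nd show ?case unfolding dep_def by auto
      qed
      then have "deriv (\<lambda>s. F ((p(d := t))(c := s))) (p c) = deriv (\<lambda>s. F (p(c := s))) (p c)"
        by (rule deriv_cong_ev) simp
      with pt(3) False show False by (simp add: partial_def)
    qed
  qed
qed

lemma smooth_jet_add: "smooth_jet D F \<Longrightarrow> smooth_jet D G \<Longrightarrow> smooth_jet D (\<lambda>q. F q + G q)"
  unfolding smooth_jet_iff using smooth_partials_add dep_binop[of D "(+)" F G]
  by (meson finite_UnI finite_subset)

lemma smooth_jet_mult: "smooth_jet D F \<Longrightarrow> smooth_jet D G \<Longrightarrow> smooth_jet D (\<lambda>q. F q * G q)"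
  unfolding smooth_jet_iff using smooth_partials_mult dep_binop[of D "(*)" F G]
  by (meson finite_UnI finite_subset)

lemma smooth_jet_divide:
  "smooth_jet D F \<Longrightarrow> smooth_jet D G \<Longrightarrow> \<forall>q\<in>D. G q \<noteq> 0 \<Longrightarrow> smooth_jet D (\<lambda>q. F q / G q)"
  unfolding smooth_jet_iff using smooth_partials_divide dep_binop[of D "(/)" F G]
  by (meson finite_UnI finite_subset)

lemma smooth_jet_partial: "smooth_jet D F \<Longrightarrow> smooth_jet D (partial c F)"
  unfolding smooth_jet_iff using smooth_partials_partial dep_partial by (metis finite_subset)

lemma smooth_jet_sum:
  "finite S \<Longrightarrow> (\<And>x. x \<in> S \<Longrightarrow> smooth_jet D (F x)) \<Longrightarrow> smooth_jet D (\<lambda>q. \<Sum>x\<in>S. F x q)"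
  by (induction S rule: finite_induct) (auto intro: smooth_jet_add smooth_jet_const)

end

section \<open>Total derivatives on the prolongation\<close>

lemma Dvec_eq_0: "\<forall>q\<in>D. G q = 0 \<Longrightarrow> Dvec D V G p = 0"
  by (simp add: Dvec_def dep_eq_empty)

lemma (in jet_domain) smooth_jet_Dvec:
  assumes "smooth_jet D G" "\<And>c. c \<in> dep D G \<Longrightarrow> smooth_jet D (V c)"
  shows "smooth_jet D (Dvec D V G)"
proof -
  have "finite (dep D G)" using assms(1) smooth_jet_iff by blast
  then have "smooth_jet D (\<lambda>p. \<Sum>c\<in>dep D G. partial c G p * V c p)"
    using assms by (auto intro!: smooth_jet_sum smooth_jet_mult smooth_jet_partial)
  then show ?thesis by (simp add: Dvec_def[abs_def])
qed

lemma (in jet_domain) dep_Dvec: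
  "dep D (Dvec D V G) \<subseteq> dep D G \<union> (\<Union>c\<in>dep D G. dep D (V c))"
proof -
  have "dep D (Dvec D V G) \<subseteq> (\<Union>c\<in>dep D G. dep D (\<lambda>p. partial c G p * V c p))"
    unfolding Dvec_def[abs_def] by (rule dep_sum)
  also have "\<dots> \<subseteq> dep D G \<union> (\<Union>c\<in>dep D G. dep D (V c))"
    using dep_binop[of D "(*)" "partial c G" "V c" for c] dep_partial by blast
  finally show ?thesis .
qed

text \<open>\<open>pure_coord j n\<close> is the coordinate \<open>u\<^bsub>j\<^sup>n\<^esub>\<close>, with \<open>u\<^bsub>j\<^sup>0\<^esub> = u\<close>.\<close>

definition pure_coord :: "3 \<Rightarrow> nat \<Rightarrow> vc" where
  "pure_coord j n = (case n of 0 \<Rightarrow> Uc | Suc m \<Rightarrow> Dc j m)"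

lemma pure_coord_simps [simp]: "pure_coord j 0 = Uc" "pure_coord j (Suc m) = Dc j m"
  by (simp_all add: pure_coord_def)

lemma pure_coord_eq_iff [simp]: "pure_coord j n = pure_coord j m \<longleftrightarrow> n = m"
  by (cases n; cases m) simp_all

lemma inj_pure_coord: "inj (pure_coord j)"
  by (simp add: inj_def)

definition mixed_coords :: "3 \<Rightarrow> 3 \<Rightarrow> nat \<Rightarrow> jc set" where
  "mixed_coords i j n = range Xc \<union> Vc ` insert (pure_coord i 1) (pure_coord j ` {..n})"

lemma mixed_coords_mono: "m \<le> n \<Longrightarrow> mixed_coords i j m \<subseteq> mixed_coords i j n"
  by (auto simp: mixed_coords_def)

lemma pure_coord_in_mixed_coords: "m \<le> n \<Longrightarrow> Vc (pure_coord j m) \<in> mixed_coords i j n"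
  by (simp add: mixed_coords_def)

lemma Fsys_sym: "i \<noteq> j \<Longrightarrow> Fsys f i j = Fsys f j i"
  by (auto simp: Fsys_def fun_eq_iff)

lemma dep_Fsys: "dep D (Fsys f i j) \<subseteq> mixed_coords i j 1"
proof
  fix c assume c: "c \<in> dep D (Fsys f i j)"
  show "c \<in> mixed_coords i j 1"
  proof (rule ccontr)
    assume "c \<notin> mixed_coords i j 1"
    then have "Xc l \<noteq> c" "c \<noteq> Vc Uc" "c \<noteq> Vc (Dc i 0)" "c \<noteq> Vc (Dc j 0)" for l
      by (auto simp: mixed_coords_def atMost_Suc)
    then have "Fsys f i j (p(c := t)) = Fsys f i j p" for p t
      by (simp add: Fsys_def)
    with c show False unfolding dep_def by auto
  qed
qed

lemma Wpure_eq: "Wpure f j c = (case c of Xc l \<Rightarrow> (\<lambda>p. if l = j then 1 else 0)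
   | Vc Uc \<Rightarrow> (\<lambda>p. p (Vc (Dc j 0)))
   | Vc (Dc l n) \<Rightarrow> (if l = j then (\<lambda>p. p (Vc (Dc j (Suc n))))
                    else if n = 0 then Fsys f j l else (\<lambda>p. 0)))"
  by (auto simp: Wpure_def fun_eq_iff split: jc.split vc.split)

lemma comp_pure_coord_self: "comp f D j (pure_coord j n) = (\<lambda>p. p (Vc (pure_coord j (Suc n))))"
  by (cases n) (simp_all add: comp_def)

locale prolonged_system = jet_domain D for D +
  fixes f :: "3 \<Rightarrow> 3 \<Rightarrow> real^3 \<Rightarrow> real \<Rightarrow> real \<Rightarrow> real \<Rightarrow> real"
  assumes smooth_Fsys_less: "i < j \<Longrightarrow> smooth_jet D (Fsys f i j)"
begin

lemma smooth_Fsys: "i \<noteq> j \<Longrightarrow> smooth_jet D (Fsys f i j)"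
  using smooth_Fsys_less Fsys_sym by (metis linorder_neqE)

lemma smooth_jet_Wpure: "smooth_jet D (Wpure f j c)"
proof (cases c)
  case (Vc v)
  then show ?thesis
    by (cases v) (auto simp: Wpure_eq smooth_jet_const smooth_jet_coord smooth_Fsys)
qed (simp add: Wpure_eq smooth_jet_const)

lemma dep_Wpure:
  assumes "i \<noteq> j" "c \<in> mixed_coords i j n"
  shows "dep D (Wpure f j c) \<subseteq> mixed_coords i j (Suc n)"
proof -
  consider (x) l where "c = Xc l" | (i) "c = Vc (Dc i 0)" | (u) "c = Vc Uc"
    | (j) m where "c = Vc (Dc j m)" "Suc m \<le> n"
    using assms(2) unfolding mixed_coords_def by (auto simp: pure_coord_def split: nat.splits)
  then show ?thesis
  proof cases
    case x
    then show ?thesis by (simp add: Wpure_eq)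
  next
    case i
    then show ?thesis
      using assms(1) dep_Fsys[of D f i j] mixed_coords_mono[of 1 "Suc n" i j]
      by (auto simp: Wpure_eq Fsys_sym)
  next
    case u
    then show ?thesis
      using dep_coord[of D "Vc (pure_coord j 1)"] pure_coord_in_mixed_coords[of 1 "Suc n" j i]
      by (auto simp: Wpure_eq)
  next
    case j
    then show ?thesis
      using dep_coord[of D "Vc (pure_coord j (Suc (Suc m)))"]
        pure_coord_in_mixed_coords[of "Suc (Suc m)" "Suc n" j i]
      by (auto simp: Wpure_eq)
  qed
qed

text \<open>On \<open>\<R>\<^sup>\<infinity>\<close>, \<open>D\<^sub>i u\<^bsub>j\<^sup>m\<^sup>+\<^sup>1\<^esub> = D\<^sub>j\<^sup>m f\<^sub>i\<^sub>j\<close> depends on \<open>x, u, u\<^sub>i\<close> and \<open>u\<^sub>j, \<dots>, u\<^bsub>j\<^sup>m\<^sup>+\<^sup>1\<^esub>\<close> only.\<close>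

lemma smooth_dep_iterate_Fsys:
  assumes "i \<noteq> j"
  shows "smooth_jet D ((Dvec D (Wpure f j) ^^ m) (Fsys f i j))
    \<and> dep D ((Dvec D (Wpure f j) ^^ m) (Fsys f i j)) \<subseteq> mixed_coords i j (Suc m)"
proof (induction m)
  case 0
  then show ?case using smooth_Fsys[OF assms] dep_Fsys[of D f i j] by simp
next
  case (Suc m)
  let ?G = "(Dvec D (Wpure f j) ^^ m) (Fsys f i j)"
  have IH: "smooth_jet D ?G" "dep D ?G \<subseteq> mixed_coords i j (Suc m)"
    using Suc.IH by blast+
  have "dep D (Dvec D (Wpure f j) ?G) \<subseteq> dep D ?G \<union> (\<Union>c\<in>dep D ?G. dep D (Wpure f j c))"
    by (rule dep_Dvec)
  also have "\<dots> \<subseteq> mixed_coords i j (Suc (Suc m))"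
  proof (intro Un_least UN_least)
    show "dep D ?G \<subseteq> mixed_coords i j (Suc (Suc m))"
      using IH(2) mixed_coords_mono[of "Suc m" "Suc (Suc m)" i j] by simp
    show "dep D (Wpure f j c) \<subseteq> mixed_coords i j (Suc (Suc m))" if "c \<in> dep D ?G" for c
      using that IH(2) by (intro dep_Wpure[OF assms]) blast
  qed
  finally show ?case
    using IH(1) by (simp add: smooth_jet_Dvec smooth_jet_Wpure)
qed

lemma smooth_jet_comp: "smooth_jet D (comp f D i v)"
proof (cases v)
  case (Dc l m)
  then show ?thesis
    using smooth_dep_iterate_Fsys[of i l m] by (simp add: comp_def smooth_jet_coord)
qed (simp add: comp_def smooth_jet_coord)

lemma dep_comp_pure_coord:
  assumes "i \<noteq> j"
  shows "dep D (comp f D i (pure_coord j n)) \<subseteq> mixed_coords i j n"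
proof (cases n)
  case 0
  have "Vc (pure_coord i 1) \<in> mixed_coords i j n"
    by (simp add: mixed_coords_def)
  with 0 show ?thesis
    using dep_coord[of D "Vc (pure_coord i 1)"] by (auto simp: comp_def)
next
  case (Suc m)
  then show ?thesis
    using assms smooth_dep_iterate_Fsys[OF assms, of m] by (simp add: comp_def)
qed

lemma smooth_jet_Vfull: "smooth_jet D (Vfull f D i c)"
proof (cases c)
  case (Xc l)
  then show ?thesis using smooth_jet_const[of D "if l = i then 1 else 0"]
    by (simp add: Vfull_def[abs_def])
next
  case (Vc v)
  then show ?thesis using smooth_jet_comp[of i v]
    by (simp add: Vfull_def[abs_def])
qed

lemma smooth_jet_Dtot: "smooth_jet D G \<Longrightarrow> smooth_jet D (Dtot f D i G)"
  unfolding Dtot_def by (rule smooth_jet_Dvec) (simp_all add: smooth_jet_Vfull)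

end

lemma Vc_in_mixed_coords_iff:
  "Vc w \<in> mixed_coords i j n \<longleftrightarrow> w \<in> insert (pure_coord i 1) (pure_coord j ` {..n})"
  by (auto simp: mixed_coords_def)

section \<open>Vertical one-forms\<close>

definition contact_form :: "vc \<Rightarrow> form1" where
  "contact_form v = (\<lambda>p c. if c = Vc v then 1 else 0)"

definition vertical_form :: "(vc \<Rightarrow> pt \<Rightarrow> real) \<Rightarrow> form1" where
  "vertical_form g = (\<lambda>p c. case c of Xc l \<Rightarrow> 0 | Vc v \<Rightarrow> g v p)"

definition vanishes_off :: "pt set \<Rightarrow> vc set \<Rightarrow> (vc \<Rightarrow> pt \<Rightarrow> real) \<Rightarrow> bool" where
  "vanishes_off D S g \<longleftrightarrow> (\<forall>v. v \<notin> S \<longrightarrow> (\<forall>q\<in>D. g v q = 0))"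

text \<open>The coefficients of \<open>X\<^sub>i(\<Sum>\<^sub>v g\<^sub>v \<theta>\<^sub>v) = \<Sum>\<^sub>w (D\<^sub>i g\<^sub>w + \<Sum>\<^sub>v g\<^sub>v \<partial>(D\<^sub>i v)/\<partial>w) \<theta>\<^sub>w\<close>.\<close>

definition Xop_coeff :: "(3 \<Rightarrow> 3 \<Rightarrow> real^3 \<Rightarrow> real \<Rightarrow> real \<Rightarrow> real \<Rightarrow> real) \<Rightarrow> pt set \<Rightarrow> 3 \<Rightarrow>
    vc set \<Rightarrow> (vc \<Rightarrow> pt \<Rightarrow> real) \<Rightarrow> vc \<Rightarrow> pt \<Rightarrow> real" where
  "Xop_coeff f D i S g w p = Dtot f D i (g w) p + (\<Sum>v\<in>S. g v p * partial (Vc w) (comp f D i v) p)"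

lemma vertical_form_eq_sum:
  assumes "finite S" "vanishes_off D S g" "p \<in> D"
  shows "vertical_form g p c = (\<Sum>v\<in>S. g v p * contact_form v p c)"
proof (cases c)
  case (Vc w)
  have "(\<Sum>v\<in>S. g v p * contact_form v p c) = (\<Sum>v\<in>S. if v = w then g v p else 0)"
    using Vc by (intro sum.cong) (auto simp: contact_form_def)
  also have "\<dots> = g w p"
    using assms by (auto simp: vanishes_off_def)
  finally show ?thesis using Vc by (simp add: vertical_form_def)
qed (simp add: vertical_form_def contact_form_def)

lemma (in jet_domain) Xop_cong:
  assumes "\<forall>q\<in>D. \<omega> q = \<omega>' q" "p \<in> D"
  shows "Xop f D i \<omega> p = Xop f D i \<omega>' p"
proof -
  have eq: "\<forall>q\<in>D. \<omega> q c = \<omega>' q c" for c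
    using assms(1) by simp
  have "Dtot f D i (\<lambda>q. \<omega> q c) p = Dtot f D i (\<lambda>q. \<omega>' q c) p" for c
    unfolding Dtot_def Dvec_def dep_cong[OF eq]
    by (intro sum.cong refl arg_cong2[where f = "(*)"] partial_cong[OF assms(2) eq])
  moreover have "fsupp D \<omega> = fsupp D \<omega>'"
    using assms(1) by (auto simp: fsupp_def)
  ultimately show ?thesis
    using assms by (simp add: Xop_def)
qed

lemma Xop_vertical_form:
  assumes "finite S" "vanishes_off D S g" "p \<in> D"
  shows "Xop f D i (vertical_form g) p = vertical_form (Xop_coeff f D i S g) p"
proof
  fix c
  have Dtot_eq: "Dtot f D i (\<lambda>q. vertical_form g q c) p
      = (case c of Xc l \<Rightarrow> 0 | Vc w \<Rightarrow> Dtot f D i (g w) p)"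
    by (cases c) (simp_all add: vertical_form_def Dtot_def Dvec_eq_0)
  have supp: "{v. Vc v \<in> fsupp D (vertical_form g)} \<subseteq> S"
    using assms(2) by (auto simp: fsupp_def vertical_form_def vanishes_off_def)
  have "(\<Sum>v\<in>{v. Vc v \<in> fsupp D (vertical_form g)}. vertical_form g p (Vc v) * dV (comp f D i v) p c)
      = (\<Sum>v\<in>S. g v p * dV (comp f D i v) p c)"
    by (rule sum.mono_neutral_cong_left[OF assms(1) supp])
      (use assms(3) in \<open>auto simp: fsupp_def vertical_form_def\<close>)
  with Dtot_eq show "Xop f D i (vertical_form g) p c = vertical_form (Xop_coeff f D i S g) p c"
    by (cases c) (simp_all add: Xop_def vertical_form_def Xop_coeff_def dV_def)
qed

lemma (in prolonged_system) smooth_jet_Xop_coeff: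
  assumes "finite S" "\<And>v. smooth_jet D (g v)"
  shows "smooth_jet D (Xop_coeff f D i S g w)"
proof -
  have "smooth_jet D (\<lambda>p. Dtot f D i (g w) p + (\<Sum>v\<in>S. g v p * partial (Vc w) (comp f D i v) p))"
    using assms by (intro smooth_jet_add smooth_jet_Dtot smooth_jet_sum smooth_jet_mult
        smooth_jet_partial smooth_jet_comp)
  then show ?thesis by (simp add: Xop_coeff_def[abs_def])
qed

lemma (in jet_domain) Xop_coeff_eq_0:
  assumes "p \<in> D" "\<forall>q\<in>D. g w q = 0" "\<forall>v\<in>S. Vc w \<notin> dep D (comp f D i v)"
  shows "Xop_coeff f D i S g w p = 0"
  using assms by (simp add: Xop_coeff_def Dtot_def Dvec_eq_0 partial_eq_0_if_notin_dep)

lemma (in jet_domain) vanishes_off_Xop_coeff: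
  assumes "vanishes_off D S g" "S \<subseteq> T"
    and "\<And>v w. v \<in> S \<Longrightarrow> Vc w \<in> dep D (comp f D i v) \<Longrightarrow> w \<in> T"
  shows "vanishes_off D T (Xop_coeff f D i S g)"
  unfolding vanishes_off_def
proof (intro allI impI ballI)
  fix w p assume w: "w \<notin> T" and p: "p \<in> D"
  have "\<forall>q\<in>D. g w q = 0"
    using assms(1,2) w unfolding vanishes_off_def by blast
  moreover have "\<forall>v\<in>S. Vc w \<notin> dep D (comp f D i v)"
    using assms(3) w by blast
  ultimately show "Xop_coeff f D i S g w p = 0"
    by (rule Xop_coeff_eq_0[OF p])
qed

text \<open>Along its own direction \<open>X\<^sub>j\<close> shifts \<open>\<theta>\<^bsub>j\<^sup>n\<^esub>\<close> to \<open>\<theta>\<^bsub>j\<^sup>n\<^sup>+\<^sup>1\<^esub>\<close>, so the top coefficient moves up by one.\<close>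

lemma (in jet_domain) vanishes_off_Xop_coeff_self:
  assumes "vanishes_off D (pure_coord j ` {..k}) g"
  shows "vanishes_off D (pure_coord j ` {..Suc k}) (Xop_coeff f D j (pure_coord j ` {..k}) g)"
proof (rule vanishes_off_Xop_coeff[OF assms])
  fix v w assume v: "v \<in> pure_coord j ` {..k}" and w: "Vc w \<in> dep D (comp f D j v)"
  obtain n where n: "n \<le> k" "v = pure_coord j n"
    using v by blast
  then have "w = pure_coord j (Suc n)"
    using w dep_coord[of D "Vc (pure_coord j (Suc n))"] by (auto simp: comp_pure_coord_self)
  with n show "w \<in> pure_coord j ` {..Suc k}"
    by (intro image_eqI[of _ _ "Suc n"]) auto
qed auto

lemma Xop_coeff_self_top:
  assumes "vanishes_off D (pure_coord j ` {..k}) g" "p \<in> D"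
  shows "Xop_coeff f D j (pure_coord j ` {..k}) g (pure_coord j (Suc k)) p = g (pure_coord j k) p"
proof -
  have "pure_coord j (Suc k) \<notin> pure_coord j ` {..k}"
    by (subst inj_image_mem_iff[OF inj_pure_coord]) simp
  then have "\<forall>q\<in>D. g (pure_coord j (Suc k)) q = 0"
    using assms(1) by (simp add: vanishes_off_def)
  then have "Xop_coeff f D j (pure_coord j ` {..k}) g (pure_coord j (Suc k)) p
      = (\<Sum>n\<le>k. g (pure_coord j n) p * (if k = n then 1 else 0))"
    by (simp add: Xop_coeff_def Dtot_def Dvec_eq_0 sum.reindex inj_on_def comp_pure_coord_self
        partial_coord)
  also have "\<dots> = g (pure_coord j k) p"
    by (simp add: if_distrib[of "\<lambda>x. _ * x"] sum.delta' cong: if_cong)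
  finally show ?thesis .
qed

lemma (in prolonged_system) vanishes_off_Xop_coeff_other:
  assumes "i \<noteq> j" "vanishes_off D (pure_coord j ` {..k}) g"
  shows "vanishes_off D (insert (pure_coord i 1) (pure_coord j ` {..k}))
    (Xop_coeff f D i (pure_coord j ` {..k}) g)"
proof (rule vanishes_off_Xop_coeff[OF assms(2)])
  fix v w assume "v \<in> pure_coord j ` {..k}" "Vc w \<in> dep D (comp f D i v)"
  then have "Vc w \<in> mixed_coords i j k"
    using dep_comp_pure_coord[OF assms(1)] mixed_coords_mono[of _ k i j] by blast
  then show "w \<in> insert (pure_coord i 1) (pure_coord j ` {..k})"
    by (simp add: Vc_in_mixed_coords_iff)
qed auto

section \<open>Adapted order\<close>

definition adapted_comb :: "(3 \<Rightarrow> 3 \<Rightarrow> real^3 \<Rightarrow> real \<Rightarrow> real \<Rightarrow> real \<Rightarrow> real) \<Rightarrow> pt set \<Rightarrow>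
    (pt \<Rightarrow> real) \<Rightarrow> nat \<Rightarrow> (3 \<Rightarrow> pt \<Rightarrow> real) \<Rightarrow> (pt \<Rightarrow> real) \<Rightarrow> (3 \<Rightarrow> nat \<Rightarrow> pt \<Rightarrow> real) \<Rightarrow> form1" where
  "adapted_comb f D \<mu> k s a b = (\<lambda>p c. (\<Sum>l\<in>UNIV. s l p * sigma l p c) + a p * Theta \<mu> p c
     + (\<Sum>l\<in>UNIV. \<Sum>m\<in>{1..k}. b l m p * xi f D \<mu> l m p c))"

lemma adapted_order_le1_iff:
  "adapted_order_le1 f D \<mu> k \<omega> \<longleftrightarrow>
    (\<exists>s a b. (\<forall>l. smooth_jet D (s l)) \<and> smooth_jet D a \<and> (\<forall>l m. smooth_jet D (b l m))
       \<and> (\<forall>p\<in>D. \<omega> p = adapted_comb f D \<mu> k s a b p))"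
  by (simp add: adapted_order_le1_def adapted_comb_def fun_eq_iff)

lemma adapted_comb_add:
  "adapted_comb f D \<mu> k (\<lambda>l p. s l p + s' l p) (\<lambda>p. a p + a' p) (\<lambda>l m p. b l m p + b' l m p) p
    = (\<lambda>c. adapted_comb f D \<mu> k s a b p c + adapted_comb f D \<mu> k s' a' b' p c)"
  by (simp add: adapted_comb_def fun_eq_iff algebra_simps sum.distrib)

lemma adapted_comb_scale:
  "adapted_comb f D \<mu> k (\<lambda>l p. h p * s l p) (\<lambda>p. h p * a p) (\<lambda>l m p. h p * b l m p) p
    = (\<lambda>c. h p * adapted_comb f D \<mu> k s a b p c)"
  by (simp add: adapted_comb_def fun_eq_iff algebra_simps sum_distrib_left)

lemma adapted_order_cong:
  "\<forall>p\<in>D. \<omega> p = \<omega>' p \<Longrightarrow> adapted_order_le1 f D \<mu> k \<omega> \<Longrightarrow> adapted_order_le1 f D \<mu> k \<omega>'"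
  unfolding adapted_order_le1_iff by metis

lemma adapted_order_zero: "adapted_order_le1 f D \<mu> k (\<lambda>p c. 0)"
  unfolding adapted_order_le1_iff
  by (intro exI[of _ "\<lambda>l p. 0"] exI[of _ "\<lambda>p. 0"] exI[of _ "\<lambda>l m p. 0"])
    (simp add: smooth_jet_const adapted_comb_def fun_eq_iff)

lemma adapted_order_xi:
  assumes "m \<le> k"
  shows "adapted_order_le1 f D \<mu> k (xi f D \<mu> l m)"
proof (cases "m = 0")
  case True
  then show ?thesis
    unfolding adapted_order_le1_iff
    by (intro exI[of _ "\<lambda>l p. 0"] exI[of _ "\<lambda>p. 1"] exI[of _ "\<lambda>l m p. 0"])
      (simp add: smooth_jet_const adapted_comb_def xi_def fun_eq_iff)
next
  case False
  define b where "b = (\<lambda>l' m' (p :: pt). if l' = l \<and> m' = m then 1 else 0 :: real)"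
  have "(\<Sum>m'\<in>{1..k}. b l' m' p * xi f D \<mu> l' m' p c) = (if l' = l then xi f D \<mu> l m p c else 0)"
    for l' p c
    using False assms
    by (cases "l' = l") (simp_all add: b_def if_distrib[of "\<lambda>x. x * _"] sum.delta cong: if_cong)
  then have "adapted_comb f D \<mu> k (\<lambda>l p. 0) (\<lambda>p. 0) b p = xi f D \<mu> l m p" for p
    by (simp add: adapted_comb_def fun_eq_iff)
  then show ?thesis
    unfolding adapted_order_le1_iff
    by (intro exI[of _ "\<lambda>l p. 0"] exI[of _ "\<lambda>p. 0"] exI[of _ b])
      (simp add: smooth_jet_const b_def)
qed

context jet_domain
begin

lemma adapted_order_add:
  assumes "adapted_order_le1 f D \<mu> k \<omega>" "adapted_order_le1 f D \<mu> k \<omega>'"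
  shows "adapted_order_le1 f D \<mu> k (\<lambda>p c. \<omega> p c + \<omega>' p c)"
proof -
  obtain s a b where "\<forall>l. smooth_jet D (s l)" "smooth_jet D a" "\<forall>l m. smooth_jet D (b l m)"
    "\<forall>p\<in>D. \<omega> p = adapted_comb f D \<mu> k s a b p"
    using assms(1) unfolding adapted_order_le1_iff by blast
  moreover obtain s' a' b' where "\<forall>l. smooth_jet D (s' l)" "smooth_jet D a'" "\<forall>l m. smooth_jet D (b' l m)"
    "\<forall>p\<in>D. \<omega>' p = adapted_comb f D \<mu> k s' a' b' p"
    using assms(2) unfolding adapted_order_le1_iff by blast
  ultimately show ?thesis
    unfolding adapted_order_le1_iff
    by (intro exI[of _ "\<lambda>l p. s l p + s' l p"] exI[of _ "\<lambda>p. a p + a' p"]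
        exI[of _ "\<lambda>l m p. b l m p + b' l m p"])
      (simp add: smooth_jet_add adapted_comb_add)
qed

lemma adapted_order_scale:
  assumes "smooth_jet D h" "adapted_order_le1 f D \<mu> k \<omega>"
  shows "adapted_order_le1 f D \<mu> k (\<lambda>p c. h p * \<omega> p c)"
proof -
  obtain s a b where "\<forall>l. smooth_jet D (s l)" "smooth_jet D a" "\<forall>l m. smooth_jet D (b l m)"
    "\<forall>p\<in>D. \<omega> p = adapted_comb f D \<mu> k s a b p"
    using assms(2) unfolding adapted_order_le1_iff by blast
  with assms(1) show ?thesis
    unfolding adapted_order_le1_iff
    by (intro exI[of _ "\<lambda>l p. h p * s l p"] exI[of _ "\<lambda>p. h p * a p"]
        exI[of _ "\<lambda>l m p. h p * b l m p"])
      (simp add: smooth_jet_mult adapted_comb_scale)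
qed

lemma adapted_order_sum:
  "finite S \<Longrightarrow> (\<And>x. x \<in> S \<Longrightarrow> adapted_order_le1 f D \<mu> k (\<omega> x)) \<Longrightarrow>
    adapted_order_le1 f D \<mu> k (\<lambda>p c. \<Sum>x\<in>S. \<omega> x p c)"
  by (induction S rule: finite_induct) (simp_all add: adapted_order_zero adapted_order_add)

end

locale rescaled_system = prolonged_system D f for D f +
  fixes \<mu> :: "pt \<Rightarrow> real"
  assumes smooth_mu: "smooth_jet D \<mu>"
    and mu_nonzero: "p \<in> D \<Longrightarrow> \<mu> p \<noteq> 0"
begin

lemma xi_expansion:
  "\<exists>g. (\<forall>v. smooth_jet D (g v)) \<and> vanishes_off D (pure_coord j ` {..k}) g
     \<and> (\<forall>p\<in>D. g (pure_coord j k) p = \<mu> p) \<and> (\<forall>p\<in>D. xi f D \<mu> j k p = vertical_form g p)"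
proof (induction k)
  case 0
  define g where "g = (\<lambda>v. if v = Uc then \<mu> else (\<lambda>_. 0))"
  have "xi f D \<mu> j 0 p = vertical_form g p" for p
    by (auto simp: xi_def Theta_def vertical_form_def g_def fun_eq_iff split: jc.split)
  then show ?case
    using smooth_mu smooth_jet_const
    by (intro exI[of _ g]) (auto simp: g_def vanishes_off_def)
next
  case (Suc k)
  define S where "S = pure_coord j ` {..k}"
  obtain g where smooth: "\<And>v. smooth_jet D (g v)" and vanish: "vanishes_off D S g"
    and top: "\<forall>p\<in>D. g (pure_coord j k) p = \<mu> p" and xi: "\<forall>p\<in>D. xi f D \<mu> j k p = vertical_form g p"
    using Suc.IH unfolding S_def by blast
  define g' where "g' = Xop_coeff f D j S g"
  have "finite S" by (simp add: S_def)
  have "xi f D \<mu> j (Suc k) p = vertical_form g' p" if p: "p \<in> D" for p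
  proof -
    have "xi f D \<mu> j (Suc k) p = Xop f D j (vertical_form g) p"
      using Xop_cong[OF xi p] by (simp add: xi_def)
    also have "\<dots> = vertical_form g' p"
      unfolding g'_def by (rule Xop_vertical_form[OF \<open>finite S\<close> vanish p])
    finally show ?thesis .
  qed
  moreover have "smooth_jet D (g' w)" for w
    unfolding g'_def by (rule smooth_jet_Xop_coeff[OF \<open>finite S\<close> smooth])
  moreover have "vanishes_off D (pure_coord j ` {..Suc k}) g'"
    unfolding g'_def S_def by (rule vanishes_off_Xop_coeff_self[OF vanish[unfolded S_def]])
  moreover have "\<forall>p\<in>D. g' (pure_coord j (Suc k)) p = \<mu> p"
    using Xop_coeff_self_top[OF vanish[unfolded S_def]] top unfolding g'_def S_def by simp
  ultimately show ?case by blast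
qed

text \<open>Triangularity: \<open>\<xi>\<^sub>l\<^sup>n = \<mu> \<theta>\<^bsub>l\<^sup>n\<^esub> + (lower terms)\<close> can be solved for \<open>\<theta>\<^bsub>l\<^sup>n\<^esub>\<close> because \<open>\<mu> \<noteq> 0\<close>.\<close>

lemma adapted_order_contact_form:
  assumes "n \<le> k"
  shows "adapted_order_le1 f D \<mu> k (contact_form (pure_coord l n))"
  using assms
proof (induction n rule: less_induct)
  case (less n)
  obtain g where smooth: "\<And>v. smooth_jet D (g v)" and vanish: "vanishes_off D (pure_coord l ` {..n}) g"
    and top: "\<forall>p\<in>D. g (pure_coord l n) p = \<mu> p" and xi: "\<forall>p\<in>D. xi f D \<mu> l n p = vertical_form g p"
    using xi_expansion by blast
  define lower where
    "lower = (\<lambda>p c. \<Sum>m<n. g (pure_coord l m) p * contact_form (pure_coord l m) p c)"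
  have expand: "xi f D \<mu> l n p c = \<mu> p * contact_form (pure_coord l n) p c + lower p c"
    if p: "p \<in> D" for p c
  proof -
    have "xi f D \<mu> l n p c = (\<Sum>v\<in>pure_coord l ` {..n}. g v p * contact_form v p c)"
      using xi vertical_form_eq_sum[OF _ vanish p] p by simp
    also have "\<dots> = (\<Sum>m\<le>n. g (pure_coord l m) p * contact_form (pure_coord l m) p c)"
      by (simp add: sum.reindex[OF inj_on_subset[OF inj_pure_coord]])
    also have "\<dots> = g (pure_coord l n) p * contact_form (pure_coord l n) p c + lower p c"
      by (simp add: lower_def flip: lessThan_Suc_atMost)
    finally show ?thesis using top p by simp
  qed
  have "adapted_order_le1 f D \<mu> k lower"
    unfolding lower_def
    using less smooth by (intro adapted_order_sum adapted_order_scale) auto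
  then have "adapted_order_le1 f D \<mu> k (\<lambda>p c. (1 / \<mu> p) * (xi f D \<mu> l n p c + (-1) * lower p c))"
    using less.prems smooth_mu mu_nonzero
    by (intro adapted_order_scale adapted_order_add adapted_order_xi smooth_jet_divide smooth_jet_const)
      auto
  moreover have "\<forall>p\<in>D. (\<lambda>c. (1 / \<mu> p) * (xi f D \<mu> l n p c + (-1) * lower p c))
      = contact_form (pure_coord l n) p"
    using expand mu_nonzero by (simp add: fun_eq_iff)
  ultimately show ?case
    by (rule adapted_order_cong[rotated])
qed

lemma adapted_order_Xop_xi:
  assumes "1 \<le> k" "i \<noteq> j"
  shows "adapted_order_le1 f D \<mu> k (Xop f D i (xi f D \<mu> j k))"
proof -
  define S where "S = pure_coord j ` {..k}"
  define T where "T = insert (pure_coord i 1) S"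
  obtain g where smooth: "\<And>v. smooth_jet D (g v)" and vanish: "vanishes_off D S g"
    and xi: "\<forall>p\<in>D. xi f D \<mu> j k p = vertical_form g p"
    using xi_expansion unfolding S_def by blast
  define h where "h = Xop_coeff f D i S g"
  have "finite S" "finite T" by (simp_all add: S_def T_def)
  have "vanishes_off D T h"
    unfolding h_def T_def S_def using assms(2) vanish[unfolded S_def]
    by (rule vanishes_off_Xop_coeff_other)
  then have "\<forall>p\<in>D. (\<lambda>c. \<Sum>w\<in>T. h w p * contact_form w p c) = Xop f D i (xi f D \<mu> j k) p"
    using Xop_cong[OF xi] Xop_vertical_form[OF \<open>finite S\<close> vanish]
      vertical_form_eq_sum[OF \<open>finite T\<close>]
    by (simp add: h_def fun_eq_iff)
  moreover have "adapted_order_le1 f D \<mu> k (\<lambda>p c. \<Sum>w\<in>T. h w p * contact_form w p c)"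
  proof (intro adapted_order_sum[OF \<open>finite T\<close>] adapted_order_scale)
    fix w assume "w \<in> T"
    then consider "w = pure_coord i 1" | n where "n \<le> k" "w = pure_coord j n"
      by (auto simp: T_def S_def)
    then show "adapted_order_le1 f D \<mu> k (contact_form w)"
      by cases (use assms(1) adapted_order_contact_form in blast)+
    show "smooth_jet D (h w)"
      unfolding h_def by (rule smooth_jet_Xop_coeff[OF \<open>finite S\<close> smooth])
  qed
  ultimately show ?thesis
    by (rule adapted_order_cong)
qed

end

theorem lemma3p3:
  fixes U :: "(real^3) set" and a b :: real
    and f :: "3 \<Rightarrow> 3 \<Rightarrow> real^3 \<Rightarrow> real \<Rightarrow> real \<Rightarrow> real \<Rightarrow> real"
    and \<mu> :: "pt \<Rightarrow> real"
  assumes "open U" and "connected U" and "a < b"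
    and "\<forall>i j. i < j \<longrightarrow> smooth_jet (jdom U a b) (Fsys f i j)"
    and "\<forall>i j k. i \<noteq> j \<and> j \<noteq> k \<and> i \<noteq> k \<longrightarrow>
           (\<forall>p\<in>jdom U a b. Dtot f (jdom U a b) k (Fsys f i j) p = Dtot f (jdom U a b) i (Fsys f k j) p)"
    and "smooth_jet (jdom U a b) \<mu>" and "\<forall>p\<in>jdom U a b. \<mu> p \<noteq> 0"
  shows "\<forall>k\<ge>1. \<forall>i j. i \<noteq> j \<longrightarrow>
           adapted_order_le1 f (jdom U a b) \<mu> k (Xop f (jdom U a b) i (xi f (jdom U a b) \<mu> j k))"
proof -
  interpret rescaled_system "jdom U a b" f \<mu>
    using assms(1,4,6,7) by unfold_locales (simp_all add: line_open_jdom)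
  show ?thesis
    using adapted_order_Xop_xi by blast
qed

end
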